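(* Consider either the orthonormal Chebyshev polynomials of the first kind, $p_0(x)=1/\sqrt{\pi}$, $p_n(\cos\theta)=\sqrt{2/\pi}\cos(n\theta)$ for $n\ge1$ (orthonormal on $[-1,1]$ with respect to $(1-x^2)^{-1/2}dx$), whose zeros are $\zeta_j^{(n)}=\cos\big(\frac{(2j-1)\pi}{2n}\big)$, $j=1,\dots,n$; or the orthonormal Chebyshev polynomials of the second kind, $p_n(\cos\theta)=\sqrt{2/\pi}\,\frac{\sin((n+1)\theta)}{\sin\theta}$, $n\ge0$ (orthonormal with respect to $(1-x^2)^{1/2}dx$), whose zeros are $\zeta_j^{(n)}=\cos\big(\frac{j\pi}{n+1}\big)$, $j=1,\dots,n$. For $n\in\mathbb{N}$ and $y\in(-1,1)$ let $\lambda_n(y)=\big(\sum_{i=0}^{n-1}p_i^2(y)\big)^{-1}$, $\Psi_{n,j}(y)=\lambda_n(y)p_{j-1}^2(y)$ ($j=1,\dots,n$), $\mathcal S(\bm\Psi_n(y))=-\sum_{j=1}^n\Psi_{n,j}(y)\log\Psi_{n,j}(y)$, and $\mathfrak S_{n,j}=\mathcal S(\bm\Psi_n(\zeta_j^{(n)}))$. Let $x=\cos\theta\in(-1,1)$, $\theta\in(0,\pi)$. (i) If $\theta/\pi\notin\mathbb{Q}$, then (for either family) there is a sequence of pairs $(n_m,j_m)$ with $n_m\to\infty$ and $1\le j_m\le n_m$ such that $$\lim_{m\to\infty}\zeta_{j_m}^{(n_m)}=x\quad\text{and}\quad\lim_{m\to\infty}\big(\mathfrak S_{n_m,j_m}-\mathcal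 S(\bm\Psi_{n_m}(x))\big)=0.$$ (ii) If $\theta/\pi=s/k$ with $s,k\in\mathbb{N}$, $s<k$, $\operatorname{GCD}(s,k)=1$, then the conclusion of (i) still holds if the polynomials are of the second kind, or if $k$ is even. However, for the Chebyshev polynomials of the first kind with $k$ odd, $$\limsup_{n\to\infty}\big(\mathfrak S_{n,j_n}-\mathcal S(\bm\Psi_n(x))\big)<0$$ for every sequence $\{j_n\}$ with $1\le j_n\le n$ (along any subsequence of $n$).
   Context: $\operatorname{GCD}$ denotes the greatest common divisor; $\mathcal S$ is the Shannon entropy of the discrete probability distribution $\bm\Psi_n(y)=(\Psi_{n,1}(y),\dots,\Psi_{n,n}(y))$. *)

theory Defs
  imports "HOL-Analysis.Analysis"
begin

datatype cheb_kind = First | Second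

fun cheb_p :: "cheb_kind \<Rightarrow> nat \<Rightarrow> real \<Rightarrow> real" where
  "cheb_p First 0 y = 1 / sqrt pi"
| "cheb_p First (Suc n) y = sqrt (2 / pi) * cos (real (Suc n) * arccos y)"
| "cheb_p Second n y = sqrt (2 / pi) * sin (real (n + 1) * arccos y) / sin (arccos y)"

fun cheb_zero :: "cheb_kind \<Rightarrow> nat \<Rightarrow> nat \<Rightarrow> real" where
  "cheb_zero First n j = cos (real (2 * j - 1) * pi / (2 * real n))"
| "cheb_zero Second n j = cos (real j * pi / (real n + 1))"

definition christoffel :: "cheb_kind \<Rightarrow> nat \<Rightarrow> real \<Rightarrow> real" where
  "christoffel c n y = 1 / (\<Sum>i<n. (cheb_p c i y)\<^sup>2)"

definition Psi :: "cheb_kind \<Rightarrow> nat \<Rightarrow> nat \<Rightarrow> real \<Rightarrow> real" where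
  "Psi c n j y = christoffel c n y * (cheb_p c (j - 1) y)\<^sup>2"

text \<open>Shannon entropy (natural log; 0 log 0 = 0 since ln 0 = 0 in Isabelle).\<close>
definition entropy :: "cheb_kind \<Rightarrow> nat \<Rightarrow> real \<Rightarrow> real" where
  "entropy c n y = - (\<Sum>j=1..n. Psi c n j y * ln (Psi c n j y))"

definition entropy_at_zero :: "cheb_kind \<Rightarrow> nat \<Rightarrow> nat \<Rightarrow> real" where
  "entropy_at_zero c n j = entropy c n (cheb_zero c n j)"

end

theory Submission
  imports Defs "HOL-Real_Asymp.Real_Asymp"
begin

text \<open>
  Up to a constant factor, \<open>p\<^sub>i(cos \<phi>)\<^sup>2\<close> equals the weight \<open>1 + cos (2 i \<phi>)\<close> (first kind, \<open>i > 0\<close>)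
  or \<open>1 - cos (2 (i + 1) \<phi>)\<close> (second kind), and the entropy only depends on these weights.
  They are \<open>2 n\<close>-Lipschitz in \<open>\<phi>\<close> and, for \<open>0 < \<theta> < \<pi>\<close>, have total mass \<open>n + O(1)\<close>; as
  \<open>x ln x\<close> is uniformly continuous on \<open>[0, 2]\<close>, the entropies at angles \<open>\<phi>\<close> and \<open>\<theta>\<close> differ by
  \<open>o(1)\<close> once \<open>n |\<phi> - \<theta>| \<rightarrow> 0\<close>. Zeros with this property come from Kronecker's theorem when
  \<open>\<theta>/\<pi>\<close> is irrational, and in the rational cases of (ii) \<open>cos \<theta>\<close> is itself a zero for
  infinitely many \<open>n\<close>.

  For the first kind with \<open>\<theta> = \<pi> s/k\<close>, \<open>k\<close> odd, write \<open>x ln x\<close> at \<open>1 + cos v\<close> as an integral over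
  \<open>y \<in> [0, 1]\<close> of a kernel whose power series in \<open>y\<close> involves only the sums \<open>\<Sum>\<^sub>i cos (l v\<^sub>i)\<close>.
  At every zero these sums make \<open>\<Sum> w\<^sub>i ln w\<^sub>i \<ge> n (1 - ln 2) + O(1)\<close>, whereas the \<open>k\<close>-periodic
  weights at \<open>cos \<theta>\<close> give at most \<open>n (1 - ln 2 - 1/(k (k\<^sup>2 - 1))) + O(1)\<close>. Both weight vectors
  have mass \<open>n + O(1)\<close>, so the entropy at the zero is smaller by at least about \<open>1/(k (k\<^sup>2 - 1))\<close>.
\<close>

section \<open>Trigonometric sums\<close>

lemma abs_cos_diff_le: "\<bar>cos x - cos y\<bar> \<le> \<bar>x - y\<bar>" for x y :: real
proof -
  have "\<bar>cos x - cos y\<bar> = 2 * \<bar>sin ((x + y) / 2)\<bar> * \<bar>sin ((y - x) / 2)\<bar>"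
    by (simp add: cos_diff_cos abs_mult)
  also have "\<dots> \<le> 2 * 1 * \<bar>(y - x) / 2\<bar>"
    by (intro mult_mono abs_sin_x_le_abs_x) auto
  finally show ?thesis by simp
qed

lemma sum_cos_mult:
  assumes "sin (a / 2) \<noteq> 0"
  shows "(\<Sum>i<n. cos (real i * a)) = (sin ((real n - 1/2) * a) + sin (a / 2)) / (2 * sin (a / 2))"
proof (induction n)
  case 0
  have "(real 0 - 1/2) * a = - (a / 2)" by simp
  then show ?case by (simp del: of_nat_0)
next
  case (Suc n)
  have "2 * sin (a / 2) * cos (real n * a) = sin (real n * a + a / 2) - sin (real n * a - a / 2)"
    by (simp add: sin_add sin_diff)
  moreover have "(real (Suc n) - 1/2) * a = real n * a + a / 2" "(real n - 1/2) * a = real n * a - a / 2"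
    by (simp_all add: algebra_simps)
  ultimately show ?case
    using Suc assms by (simp add: field_simps)
qed

lemma abs_sum_cos_mult_le:
  assumes "sin (a / 2) \<noteq> 0"
  shows "\<bar>\<Sum>i<n. cos (real i * a)\<bar> \<le> 1 / \<bar>sin (a / 2)\<bar>"
proof -
  have "\<bar>sin ((real n - 1/2) * a) + sin (a / 2)\<bar> \<le> 2"
    using abs_sin_le_one[of "(real n - 1/2) * a"] abs_sin_le_one[of "a / 2"] by linarith
  then show ?thesis
    using assms by (simp add: sum_cos_mult abs_mult divide_le_eq)
qed

lemma sum_cos_mult_pi_div:
  assumes "n > 0"
  shows "(\<Sum>i<n. cos (real i * (real M * pi / real n))) =
           (if 2 * n dvd M then real n else if odd M then 1 else 0)"
proof (cases "2 * n dvd M")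
  case True
  then obtain l where l: "M = 2 * n * l" ..
  have "cos (real i * (real M * pi / real n)) = 1" for i
  proof -
    have "real i * (real M * pi / real n) = 2 * pi * of_int (int (i * l))"
      using assms by (simp add: l field_simps)
    then show ?thesis by (simp only: cos_int_2pin)
  qed
  then show ?thesis using True by simp
next
  case False
  define a where "a = real M * pi / real n"
  have "sin (a / 2) \<noteq> 0"
  proof
    assume "sin (a / 2) = 0"
    then obtain l :: int where "a / 2 = of_int l * pi" by (auto simp: sin_zero_iff_int2)
    then have "real M = real (2 * n) * of_int l"
      using assms by (simp add: a_def field_simps)
    then have "int M = int (2 * n) * l"
      by (metis of_int_eq_iff of_int_mult of_int_of_nat_eq)
    then have "2 * n dvd M"
      by (metis dvd_triv_left int_dvd_int_iff)
    then show False using False by simp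
  qed
  moreover have "sin ((real n - 1/2) * a) = - ((-1) ^ M) * sin (a / 2)"
  proof -
    have "(real n - 1/2) * a = real M * pi - a / 2" using assms by (simp add: a_def algebra_simps)
    then show ?thesis by (simp add: sin_diff sin_npi cos_npi)
  qed
  ultimately show ?thesis
    using False by (simp add: sum_cos_mult a_def[symmetric])
qed

section \<open>Entropy of a weight vector\<close>

definition xlnx :: "real \<Rightarrow> real" where
  "xlnx x = x * ln x"

definition weight_entropy :: "(nat \<Rightarrow> real) \<Rightarrow> nat \<Rightarrow> real" where
  "weight_entropy w n = ln (\<Sum>i<n. w i) - (\<Sum>i<n. xlnx (w i)) / (\<Sum>i<n. w i)"

lemma entropy_eq_weight_entropy:
  assumes scaled: "\<And>i. i < n \<Longrightarrow> (cheb_p c i y)\<^sup>2 = \<kappa> * w i" and "\<kappa> > 0"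
    and nonneg: "\<And>i. i < n \<Longrightarrow> w i \<ge> 0" and pos: "(\<Sum>i<n. w i) > 0"
  shows "entropy c n y = weight_entropy w n"
proof -
  define W where "W = (\<Sum>i<n. w i)"
  have "(\<Sum>i<n. (cheb_p c i y)\<^sup>2) = \<kappa> * W"
    unfolding W_def sum_distrib_left using scaled by simp
  then have Psi: "Psi c n (Suc i) y = w i / W" if "i < n" for i
    using scaled[OF that] \<open>\<kappa> > 0\<close> pos by (simp add: Psi_def christoffel_def W_def)
  have summand: "w i / W * ln (w i / W) = xlnx (w i) / W - ln W * (w i / W)" if "i < n" for i
    using nonneg[OF that] pos by (cases "w i = 0") (auto simp: xlnx_def W_def ln_div field_simps)
  have "entropy c n y = - (\<Sum>i<n. Psi c n (Suc i) y * ln (Psi c n (Suc i) y))"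
    unfolding entropy_def image_Suc_lessThan[symmetric] by (simp add: sum.reindex)
  also have "\<dots> = - (\<Sum>i<n. xlnx (w i) / W - ln W * (w i / W))"
    using Psi summand by simp
  also have "\<dots> = weight_entropy w n"
    using pos by (simp add: weight_entropy_def W_def sum_subtractf
        flip: sum_divide_distrib sum_distrib_left)
  finally show ?thesis .
qed

lemma abs_sum_lessThan_diff_le:
  fixes f g :: "nat \<Rightarrow> real"
  assumes "\<And>i. i < n \<Longrightarrow> \<bar>f i - g i\<bar> \<le> d"
  shows "\<bar>(\<Sum>i<n. f i) - (\<Sum>i<n. g i)\<bar> \<le> real n * d"
proof -
  have "\<bar>(\<Sum>i<n. f i) - (\<Sum>i<n. g i)\<bar> \<le> (\<Sum>i<n. \<bar>f i - g i\<bar>)"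
    by (metis sum_abs sum_subtractf)
  also have "\<dots> \<le> (\<Sum>i<n. d)"
    using assms by (intro sum_mono) auto
  finally show ?thesis by simp
qed

lemma abs_xlnx_le:
  assumes "0 \<le> x" "x \<le> 2"
  shows "\<bar>xlnx x\<bar> \<le> 2"
proof (cases "x = 0")
  case False
  then have "x > 0" using assms by simp
  have "x * ln x \<le> x * (x - 1)"
    using ln_le_minus_one[of x] \<open>x > 0\<close> by (intro mult_left_mono) auto
  moreover have "x * (x - 1) \<le> 2"
  proof (cases "x \<ge> 1")
    case True
    then show ?thesis using mult_mono[of x 2 "x - 1" 1] assms by simp
  next
    case False
    then show ?thesis using mult_nonneg_nonpos[of x "x - 1"] assms by simp
  qed
  moreover have "x * ln x \<ge> x - 1"
    using ln_le_minus_one[of "1 / x"] \<open>x > 0\<close> by (simp add: ln_div field_simps)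
  ultimately show ?thesis
    using assms unfolding xlnx_def by linarith
qed (simp add: xlnx_def)

lemma uniformly_continuous_on_xlnx: "uniformly_continuous_on {0..2} xlnx"
proof (rule compact_uniformly_continuous)
  show "continuous_on {0..2} xlnx"
  proof (rule continuous_on_eq_continuous_within[THEN iffD2], intro ballI)
    fix x :: real
    assume x: "x \<in> {0..2}"
    show "continuous (at x within {0..2}) xlnx"
    proof (cases "x = 0")
      case True
      have "((\<lambda>x::real. x * ln x) \<longlongrightarrow> 0) (at_right 0)"
        by real_asymp
      then show ?thesis
        using True by (simp add: continuous_within xlnx_def[abs_def] at_within_Icc_at_right)
    next
      case False
      then have "isCont xlnx x"
        using x unfolding xlnx_def by (intro continuous_intros) auto
      then show ?thesis
        using continuous_at_imp_continuous_within by blast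
    qed
  qed
qed simp

lemma abs_ln_diff_le:
  fixes x y m :: real
  assumes "0 < m" "m \<le> x" "m \<le> y"
  shows "\<bar>ln x - ln y\<bar> \<le> \<bar>x - y\<bar> / m"
proof -
  have "ln x - ln y \<le> (x - y) / y" "ln y - ln x \<le> (y - x) / x"
    using assms by (intro ln_diff_le; simp)+
  moreover have "(x - y) / y \<le> \<bar>x - y\<bar> / m" "(y - x) / x \<le> \<bar>x - y\<bar> / m"
    using assms by (auto intro!: frac_le)
  ultimately show ?thesis by linarith
qed

lemma abs_divide_diff_divide_le:
  fixes a b x y :: real
  assumes "x > 0" "y > 0"
  shows "\<bar>a / x - b / y\<bar> \<le> \<bar>a - b\<bar> / x + \<bar>b\<bar> * \<bar>x - y\<bar> / (x * y)"
proof -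
  have "a / x - b / y = (a - b) / x + b * (y - x) / (x * y)"
    using assms by (simp add: field_simps)
  also have "\<bar>\<dots>\<bar> \<le> \<bar>(a - b) / x\<bar> + \<bar>b * (y - x) / (x * y)\<bar>"
    by (rule abs_triangle_ineq)
  finally show ?thesis
    using assms by (simp add: abs_mult abs_minus_commute)
qed

lemma abs_weight_entropy_diff_le:
  assumes "n > 0" "\<delta> \<le> 1/4"
    and range: "\<And>i. i < n \<Longrightarrow> a i \<in> {0..2} \<and> b i \<in> {0..2}"
    and close: "\<And>i. i < n \<Longrightarrow> \<bar>a i - b i\<bar> \<le> \<delta>"
    and xlnx_close: "\<And>i. i < n \<Longrightarrow> \<bar>xlnx (a i) - xlnx (b i)\<bar> \<le> e"
    and mass: "(\<Sum>i<n. a i) \<ge> real n / 2"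
  shows "\<bar>weight_entropy a n - weight_entropy b n\<bar> \<le> 20 * \<delta> + 2 * e"
proof -
  define A B TA TB
    where "A = (\<Sum>i<n. a i)" and "B = (\<Sum>i<n. b i)"
      and "TA = (\<Sum>i<n. xlnx (a i))" and "TB = (\<Sum>i<n. xlnx (b i))"
  have "real n > 0"
    using \<open>n > 0\<close> by simp
  have AB: "\<bar>A - B\<bar> \<le> real n * \<delta>"
    unfolding A_def B_def using close by (rule abs_sum_lessThan_diff_le)
  have TAB: "\<bar>TA - TB\<bar> \<le> real n * e"
    unfolding TA_def TB_def using xlnx_close by (rule abs_sum_lessThan_diff_le)
  have TB: "\<bar>TB\<bar> \<le> real n * 2"
    using abs_sum_lessThan_diff_le[of n "\<lambda>i. xlnx (b i)" "\<lambda>_. 0" 2] range abs_xlnx_le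
    by (simp add: TB_def)
  have "real n * \<delta> \<le> real n / 4"
    using mult_left_mono[OF \<open>\<delta> \<le> 1/4\<close>, of "real n"] by simp
  then have A: "A \<ge> real n / 2" and B: "B \<ge> real n / 4"
    using mass AB by (auto simp: A_def)
  have "\<bar>ln A - ln B\<bar> \<le> \<bar>A - B\<bar> / (real n / 4)"
    using A B \<open>real n > 0\<close> by (intro abs_ln_diff_le) auto
  also have "\<dots> \<le> (real n * \<delta>) / (real n / 4)"
    using AB \<open>real n > 0\<close> by (intro divide_right_mono) auto
  finally have ln_close: "\<bar>ln A - ln B\<bar> \<le> 4 * \<delta>"
    using \<open>real n > 0\<close> by simp
  have "\<bar>TA - TB\<bar> / A \<le> (real n * e) / (real n / 2)"
    using TAB A \<open>real n > 0\<close> by (intro frac_le) auto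
  then have "\<bar>TA - TB\<bar> / A \<le> 2 * e"
    using \<open>real n > 0\<close> by simp
  moreover have "\<bar>TB\<bar> * \<bar>A - B\<bar> / (A * B) \<le> (real n * 2) * (real n * \<delta>) / ((real n / 2) * (real n / 4))"
    using TB AB A B \<open>real n > 0\<close> by (intro frac_le mult_mono mult_pos_pos) auto
  then have "\<bar>TB\<bar> * \<bar>A - B\<bar> / (A * B) \<le> 16 * \<delta>"
    using \<open>real n > 0\<close> by (simp add: power2_eq_square)
  moreover have "\<bar>TA / A - TB / B\<bar> \<le> \<bar>TA - TB\<bar> / A + \<bar>TB\<bar> * \<bar>A - B\<bar> / (A * B)"
    using A B \<open>real n > 0\<close> by (intro abs_divide_diff_divide_le) auto
  moreover have "weight_entropy a n - weight_entropy b n = (ln A - ln B) - (TA / A - TB / B)"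
    by (simp add: weight_entropy_def A_def B_def TA_def TB_def)
  ultimately show ?thesis
    using ln_close by linarith
qed

lemma weight_entropy_diff_tendsto_zero:
  assumes pos: "\<And>m. n m > 0"
    and range: "\<And>m i. i < n m \<Longrightarrow> a m i \<in> {0..2} \<and> b m i \<in> {0..2}"
    and close: "\<And>m i. i < n m \<Longrightarrow> \<bar>a m i - b m i\<bar> \<le> \<delta> m"
    and "\<delta> \<longlonglongrightarrow> 0"
    and mass: "eventually (\<lambda>m. (\<Sum>i<n m. a m i) \<ge> real (n m) / 2) sequentially"
  shows "(\<lambda>m. weight_entropy (a m) (n m) - weight_entropy (b m) (n m)) \<longlonglongrightarrow> 0"
proof (rule tendstoI)
  fix \<epsilon> :: real
  assume "\<epsilon> > 0"
  then obtain d where "d > 0" and d: "\<And>x y. x \<in> {0..2} \<Longrightarrow> y \<in> {0..2} \<Longrightarrow>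
      dist y x < d \<Longrightarrow> dist (xlnx y) (xlnx x) < \<epsilon> / 4"
    using uniformly_continuous_on_xlnx unfolding uniformly_continuous_on_def
    by (metis divide_pos_pos zero_less_numeral)
  have "eventually (\<lambda>m. dist (\<delta> m) 0 < min d (min (1/4) (\<epsilon> / 80))) sequentially"
    using \<open>d > 0\<close> \<open>\<epsilon> > 0\<close> by (intro tendstoD[OF \<open>\<delta> \<longlonglongrightarrow> 0\<close>]) simp
  with mass show "eventually (\<lambda>m. dist (weight_entropy (a m) (n m) - weight_entropy (b m) (n m)) 0 < \<epsilon>)
      sequentially"
  proof eventually_elim
    case (elim m)
    have "\<bar>weight_entropy (a m) (n m) - weight_entropy (b m) (n m)\<bar> \<le> 20 * \<delta> m + 2 * (\<epsilon> / 4)"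
    proof (rule abs_weight_entropy_diff_le[OF pos _ range close])
      show "\<bar>xlnx (a m i) - xlnx (b m i)\<bar> \<le> \<epsilon> / 4" if "i < n m" for i
        using d[of "b m i" "a m i"] range[OF that] close[OF that] elim by (auto simp: dist_real_def)
    qed (use elim in auto)
    also have "\<dots> < \<epsilon>"
      using elim by (auto simp: abs_less_iff)
    finally show ?case by simp
  qed
qed

section \<open>Chebyshev weights\<close>

fun cheb_weight :: "cheb_kind \<Rightarrow> real \<Rightarrow> nat \<Rightarrow> real" where
  "cheb_weight First \<phi> i = (if i = 0 then 1 else 1 + cos (2 * real i * \<phi>))"
| "cheb_weight Second \<phi> i = 1 - cos (2 * real (Suc i) * \<phi>)"

fun cheb_scale :: "cheb_kind \<Rightarrow> real \<Rightarrow> real" where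
  "cheb_scale First \<phi> = pi"
| "cheb_scale Second \<phi> = pi * (sin \<phi>)\<^sup>2"

lemma cheb_weight_bounds: "0 \<le> cheb_weight c \<phi> i \<and> cheb_weight c \<phi> i \<le> 2"
  using cos_ge_minus_one[of "2 * real i * \<phi>"] cos_le_one[of "2 * real i * \<phi>"]
    cos_ge_minus_one[of "2 * real (Suc i) * \<phi>"] cos_le_one[of "2 * real (Suc i) * \<phi>"]
  by (cases c) (auto simp del: cos_ge_minus_one cos_le_one)

lemma cheb_scale_mult_cheb_p_cos_sq:
  assumes "0 < \<phi>" "\<phi> < pi"
  shows "cheb_scale c \<phi> * (cheb_p c i (cos \<phi>))\<^sup>2 = cheb_weight c \<phi> i"
proof -
  have ac: "arccos (cos \<phi>) = \<phi>" using assms by (simp add: arccos_cos)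
  have "sin \<phi> > 0" using assms by (simp add: sin_gt_zero)
  show ?thesis
  proof (cases c)
    case First
    then show ?thesis
      using cos_double_cos[of "real i * \<phi>"]
      by (cases i) (simp_all add: ac power_mult_distrib power_divide mult.assoc del: of_nat_Suc)
  next
    case Second
    have "cheb_weight c \<phi> i = 2 * (sin (real (Suc i) * \<phi>))\<^sup>2"
      using cos_double_sin[of "real (Suc i) * \<phi>"] by (simp add: Second mult.assoc del: of_nat_Suc)
    then show ?thesis
      using \<open>sin \<phi> > 0\<close> by (simp add: Second ac power_mult_distrib power_divide del: of_nat_Suc)
  qed
qed

lemma entropy_cos_eq_weight_entropy:
  assumes "0 < \<phi>" "\<phi> < pi" "n > 0"
  shows "entropy c n (cos \<phi>) = weight_entropy (cheb_weight c \<phi>) n"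
proof (rule entropy_eq_weight_entropy)
  have "sin \<phi> > 0" using assms by (simp add: sin_gt_zero)
  then show scale: "1 / cheb_scale c \<phi> > 0" by (cases c) simp_all
  show "(cheb_p c i (cos \<phi>))\<^sup>2 = 1 / cheb_scale c \<phi> * cheb_weight c \<phi> i" for i
    using cheb_scale_mult_cheb_p_cos_sq[OF assms(1,2), of c i] scale by (simp add: field_simps)
  show "cheb_weight c \<phi> i \<ge> 0" for i
    using cheb_weight_bounds by blast
  have "cheb_weight c \<phi> 0 = cheb_scale c \<phi> * (cheb_p c 0 (cos \<phi>))\<^sup>2"
    using cheb_scale_mult_cheb_p_cos_sq[OF assms(1,2)] by simp
  also have "\<dots> > 0" using scale \<open>sin \<phi> > 0\<close>
    by (cases c) (simp_all add: arccos_cos assms less_imp_le)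
  finally show "(\<Sum>i<n. cheb_weight c \<phi> i) > 0"
    using member_le_sum[of 0 "{..<n}" "cheb_weight c \<phi>"] cheb_weight_bounds assms(3) by fastforce
qed

lemma sum_cheb_weight_First:
  fixes g :: "real \<Rightarrow> real"
  assumes "n > 0"
  shows "(\<Sum>i<n. g (cheb_weight First \<phi> i)) = (\<Sum>i<n. g (1 + cos (real i * (2 * \<phi>)))) - g 2 + g 1"
proof -
  obtain m where "n = Suc m" using assms gr0_implies_Suc by blast
  then show ?thesis
    unfolding \<open>n = Suc m\<close> sum.lessThan_Suc_shift by (simp add: mult_ac)
qed

lemma abs_cheb_weight_diff_le:
  assumes "i < n"
  shows "\<bar>cheb_weight c \<phi> i - cheb_weight c \<psi> i\<bar> \<le> 2 * real n * \<bar>\<phi> - \<psi>\<bar>"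
proof -
  have cos_diff: "\<bar>cos (2 * real m * \<phi>) - cos (2 * real m * \<psi>)\<bar> \<le> 2 * real n * \<bar>\<phi> - \<psi>\<bar>"
    if "m \<le> n" for m
  proof -
    have "\<bar>cos (2 * real m * \<phi>) - cos (2 * real m * \<psi>)\<bar> \<le> 2 * real m * \<bar>\<phi> - \<psi>\<bar>"
      using abs_cos_diff_le[of "2 * real m * \<phi>" "2 * real m * \<psi>"]
      by (simp add: abs_mult flip: right_diff_distrib)
    also have "\<dots> \<le> 2 * real n * \<bar>\<phi> - \<psi>\<bar>"
      using that by (intro mult_right_mono) auto
    finally show ?thesis .
  qed
  show ?thesis
    using assms cos_diff[of i] cos_diff[of "Suc i"]
    by (cases c) (auto simp: abs_minus_commute simp del: of_nat_Suc)
qed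

lemma abs_sum_cheb_weight_diff_le:
  assumes "0 < \<theta>" "\<theta> < pi" "n > 0"
  shows "\<bar>(\<Sum>i<n. cheb_weight c \<theta> i) - real n\<bar> \<le> 1 + 1 / sin \<theta>"
proof -
  have "sin \<theta> > 0" using assms by (simp add: sin_gt_zero)
  then have dirichlet: "\<bar>\<Sum>i<m. cos (real i * (2 * \<theta>))\<bar> \<le> 1 / sin \<theta>" for m
    using abs_sum_cos_mult_le[of "2 * \<theta>" m] by simp
  show ?thesis
  proof (cases c)
    case First
    have "(\<Sum>i<n. cheb_weight c \<theta> i) = real n + (\<Sum>i<n. cos (real i * (2 * \<theta>))) - 1"
      using sum_cheb_weight_First[OF assms(3), of "\<lambda>x. x" \<theta>] by (simp add: First sum.distrib)
    then show ?thesis using dirichlet[of n] by linarith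
  next
    case Second
    have "(\<Sum>i<Suc n. cos (real i * (2 * \<theta>))) = 1 + (\<Sum>i<n. cos (2 * real (Suc i) * \<theta>))"
      unfolding sum.lessThan_Suc_shift by (simp add: mult_ac del: of_nat_Suc)
    then have "(\<Sum>i<n. cheb_weight c \<theta> i) = real n + 1 - (\<Sum>i<Suc n. cos (real i * (2 * \<theta>)))"
      by (simp add: Second sum_subtractf del: of_nat_Suc)
    then show ?thesis using dirichlet[of "Suc n"] by linarith
  qed
qed

fun cheb_zero_angle :: "cheb_kind \<Rightarrow> nat \<Rightarrow> nat \<Rightarrow> real" where
  "cheb_zero_angle First n j = real (2 * j - 1) * pi / (2 * real n)"
| "cheb_zero_angle Second n j = real j * pi / (real n + 1)"

lemma cheb_zero_eq_cos_angle: "cheb_zero c n j = cos (cheb_zero_angle c n j)"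
  by (cases c) simp_all

lemma cheb_zero_angle_bounds:
  assumes "1 \<le> j" "j \<le> n"
  shows "0 < cheb_zero_angle c n j \<and> cheb_zero_angle c n j < pi"
proof -
  have pi_mult: "0 < pi * r \<and> pi * r < pi" if "0 < r" "r < 1" for r :: real
    using that mult_strict_left_mono[of r 1 pi] by simp
  have "1 \<le> 2 * j - 1" "2 * j - 1 < 2 * n" "j < n + 1"
    using assms by auto
  then have "1 \<le> real (2 * j - 1)" "real (2 * j - 1) < 2 * real n" "real j < real n + 1"
    by (metis of_nat_1 of_nat_le_iff, metis of_nat_less_iff of_nat_mult of_nat_numeral, simp)
  then have r: "0 < real (2 * j - 1) / (2 * real n)" "real (2 * j - 1) / (2 * real n) < 1"
    "0 < real j / (real n + 1)" "real j / (real n + 1) < 1"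
    using assms by (simp_all add: divide_less_eq)
  show ?thesis
  proof (cases c)
    case First
    then have "cheb_zero_angle c n j = pi * (real (2 * j - 1) / (2 * real n))" by simp
    with pi_mult[OF r(1,2)] show ?thesis by simp
  next
    case Second
    then have "cheb_zero_angle c n j = pi * (real j / (real n + 1))" by simp
    with pi_mult[OF r(3,4)] show ?thesis by simp
  qed
qed

section \<open>Zeros approaching a point\<close>

lemma eventually_sum_cheb_weight_ge_half:
  assumes "0 < \<theta>" "\<theta> < pi" "filterlim n at_top sequentially"
  shows "eventually (\<lambda>m. (\<Sum>i<n m. cheb_weight c \<theta> i) \<ge> real (n m) / 2) sequentially"
proof -
  define C where "C = 1 + 1 / sin \<theta>"
  obtain N :: nat where N: "real N \<ge> 2 * C"
    using real_arch_simple by blast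
  have "eventually (\<lambda>m. n m \<ge> Suc N) sequentially"
    using assms(3) by (simp add: filterlim_at_top)
  then show ?thesis
  proof eventually_elim
    case (elim m)
    then have "real N \<le> real (n m)" "n m > 0" by simp_all
    moreover have "\<bar>(\<Sum>i<n m. cheb_weight c \<theta> i) - real (n m)\<bar> \<le> C"
      using abs_sum_cheb_weight_diff_le[OF assms(1,2) \<open>n m > 0\<close>] by (simp add: C_def)
    ultimately show ?case
      using N by linarith
  qed
qed

lemma entropy_gap_tendsto_zero:
  assumes "0 < \<theta>" "\<theta> < pi" and "filterlim n at_top sequentially"
    and j: "\<And>m. 1 \<le> j m \<and> j m \<le> n m"
    and approx: "(\<lambda>m. real (n m) * \<bar>cheb_zero_angle c (n m) (j m) - \<theta>\<bar>) \<longlonglongrightarrow> 0"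
  shows "(\<lambda>m. entropy_at_zero c (n m) (j m) - entropy c (n m) (cos \<theta>)) \<longlonglongrightarrow> 0"
proof -
  define \<phi> where "\<phi> m = cheb_zero_angle c (n m) (j m)" for m
  have pos: "n m > 0" for m using j[of m] by simp
  have gap: "entropy c (n m) (cos \<theta>) - entropy_at_zero c (n m) (j m) =
      weight_entropy (cheb_weight c \<theta>) (n m) - weight_entropy (cheb_weight c (\<phi> m)) (n m)" for m
    using assms(1,2) pos cheb_zero_angle_bounds[of "j m" "n m" c] j[of m]
    by (simp add: entropy_at_zero_def cheb_zero_eq_cos_angle entropy_cos_eq_weight_entropy \<phi>_def)
  have "(\<lambda>m. weight_entropy (cheb_weight c \<theta>) (n m) - weight_entropy (cheb_weight c (\<phi> m)) (n m))
      \<longlonglongrightarrow> 0"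
  proof (rule weight_entropy_diff_tendsto_zero[OF pos])
    show "cheb_weight c \<theta> i \<in> {0..2} \<and> cheb_weight c (\<phi> m) i \<in> {0..2}" for m i
      using cheb_weight_bounds by auto
    show "\<bar>cheb_weight c \<theta> i - cheb_weight c (\<phi> m) i\<bar> \<le> 2 * (real (n m) * \<bar>\<phi> m - \<theta>\<bar>)"
      if "i < n m" for m i
      using abs_cheb_weight_diff_le[OF that, of c \<theta> "\<phi> m"] by (simp add: abs_minus_commute)
    show "(\<lambda>m. 2 * (real (n m) * \<bar>\<phi> m - \<theta>\<bar>)) \<longlonglongrightarrow> 0"
      using tendsto_mult_right_zero[OF approx, of 2] by (simp add: \<phi>_def)
    show "eventually (\<lambda>m. (\<Sum>i<n m. cheb_weight c \<theta> i) \<ge> real (n m) / 2) sequentially"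
      using assms(1-3) by (rule eventually_sum_cheb_weight_ge_half)
  qed
  then have "(\<lambda>m. - (entropy c (n m) (cos \<theta>) - entropy_at_zero c (n m) (j m))) \<longlonglongrightarrow> 0"
    unfolding gap using tendsto_minus by fastforce
  then show ?thesis by simp
qed

definition zero_angles_approach :: "cheb_kind \<Rightarrow> real \<Rightarrow> bool" where
  "zero_angles_approach c \<theta> \<longleftrightarrow>
     (\<forall>\<epsilon>>0. \<forall>M. \<exists>n\<ge>M. \<exists>j. 1 \<le> j \<and> j \<le> n \<and> real n * \<bar>cheb_zero_angle c n j - \<theta>\<bar> < \<epsilon>)"

definition entropy_gap_vanishes :: "cheb_kind \<Rightarrow> real \<Rightarrow> bool" where
  "entropy_gap_vanishes c \<theta> \<longleftrightarrow>
     (\<exists>nm jm :: nat \<Rightarrow> nat.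
        filterlim nm at_top sequentially \<and>
        (\<forall>m. 1 \<le> jm m \<and> jm m \<le> nm m) \<and>
        ((\<lambda>m. cheb_zero c (nm m) (jm m)) \<longlonglongrightarrow> cos \<theta>) \<and>
        ((\<lambda>m. entropy_at_zero c (nm m) (jm m) - entropy c (nm m) (cos \<theta>)) \<longlonglongrightarrow> 0))"

lemma entropy_gap_vanishes_if_zero_angles_approach:
  assumes "0 < \<theta>" "\<theta> < pi" and "zero_angles_approach c \<theta>"
  shows "entropy_gap_vanishes c \<theta>"
proof -
  have "\<forall>m. \<exists>n j. n \<ge> m \<and> 1 \<le> j \<and> j \<le> n \<and>
      real n * \<bar>cheb_zero_angle c n j - \<theta>\<bar> < 1 / (real m + 1)"
  proof
    fix m :: nat
    have "1 / (real m + 1) > 0" by simp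
    then show "\<exists>n j. n \<ge> m \<and> 1 \<le> j \<and> j \<le> n \<and>
        real n * \<bar>cheb_zero_angle c n j - \<theta>\<bar> < 1 / (real m + 1)"
      using assms(3) unfolding zero_angles_approach_def by blast
  qed
  then obtain nm jm where nm: "\<And>m. nm m \<ge> m" and jm: "\<And>m. 1 \<le> jm m \<and> jm m \<le> nm m"
    and close: "\<And>m. real (nm m) * \<bar>cheb_zero_angle c (nm m) (jm m) - \<theta>\<bar> < 1 / (real m + 1)"
    by metis
  define \<phi> where "\<phi> m = cheb_zero_angle c (nm m) (jm m)" for m
  have "filterlim nm at_top sequentially"
    using nm by (intro filterlim_at_top_mono[OF filterlim_ident]) auto
  moreover have approx: "(\<lambda>m. real (nm m) * \<bar>\<phi> m - \<theta>\<bar>) \<longlonglongrightarrow> 0"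
  proof (rule Lim_null_comparison)
    show "eventually (\<lambda>m. norm (real (nm m) * \<bar>\<phi> m - \<theta>\<bar>) \<le> 1 / (real m + 1)) sequentially"
      using close by (simp add: \<phi>_def less_imp_le)
  qed real_asymp
  moreover have "(\<lambda>m. cheb_zero c (nm m) (jm m)) \<longlonglongrightarrow> cos \<theta>"
  proof -
    have "norm (\<phi> m - \<theta>) \<le> real (nm m) * \<bar>\<phi> m - \<theta>\<bar>" for m
      using mult_right_mono[of 1 "real (nm m)" "\<bar>\<phi> m - \<theta>\<bar>"] jm[of m] by simp
    then have "(\<lambda>m. \<phi> m - \<theta>) \<longlonglongrightarrow> 0"
      by (intro Lim_null_comparison[OF always_eventually approx]) simp
    then have "\<phi> \<longlonglongrightarrow> \<theta>"
      by (rule LIM_zero_cancel)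
    from tendsto_cos[OF this] show ?thesis
      by (simp add: cheb_zero_eq_cos_angle \<phi>_def)
  qed
  moreover have "(\<lambda>m. entropy_at_zero c (nm m) (jm m) - entropy c (nm m) (cos \<theta>)) \<longlonglongrightarrow> 0"
    using entropy_gap_tendsto_zero[OF assms(1,2) \<open>filterlim nm at_top sequentially\<close> jm] approx
    by (simp add: \<phi>_def)
  ultimately show ?thesis
    unfolding entropy_gap_vanishes_def using jm by blast
qed

lemma exists_large_multiple_near:
  fixes \<alpha> x :: real
  assumes "\<alpha> \<notin> \<rat>" "\<epsilon> > 0"
  shows "\<exists>n\<ge>M. \<exists>h::int. \<bar>real n * \<alpha> - of_int h - x\<bar> < \<epsilon>"
proof -
  \<comment> \<open>Kronecker's theorem with target \<open>x - M \<alpha>\<close> yields a positive \<open>k\<close>; then \<open>n = M + k\<close> works.\<close>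
  obtain h k where "k > 0" "\<bar>of_int k * \<alpha> - of_int h - (x - real M * \<alpha>)\<bar> < \<epsilon>"
    using sequence_of_fractional_parts_is_dense[OF assms] .
  then have "\<bar>real (M + nat k) * \<alpha> - of_int h - x\<bar> < \<epsilon>"
    by (simp add: algebra_simps)
  then show ?thesis
    by (intro exI[of _ "M + nat k"]) auto
qed

lemma zero_angles_approach_First_irrational:
  assumes "0 < \<theta>" "\<theta> < pi" "\<theta> / pi \<notin> \<rat>"
  shows "zero_angles_approach First \<theta>"
  unfolding zero_angles_approach_def
proof (intro allI impI)
  fix \<epsilon> :: real and M :: nat
  assume "\<epsilon> > 0"
  define \<alpha> where "\<alpha> = \<theta> / pi"
  have \<alpha>: "0 < \<alpha>" "\<alpha> < 1" using assms by (simp_all add: \<alpha>_def)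
  obtain n h where "n \<ge> Suc M" and h: "\<bar>real n * \<alpha> - of_int h - 1/2\<bar> < min (\<epsilon> / pi) (1/4)"
    using exists_large_multiple_near[of \<alpha> "min (\<epsilon> / pi) (1/4)" "Suc M" "1/2"] assms \<open>\<epsilon> > 0\<close>
    by (auto simp: \<alpha>_def)
  have "0 < real n * \<alpha>" "real n * \<alpha> < real n"
    using \<alpha> \<open>n \<ge> Suc M\<close> by simp_all
  then have "0 \<le> h" "h < int n"
    using h by linarith+
  define j where "j = nat (h + 1)"
  have "1 \<le> j" "j \<le> n"
    using \<open>0 \<le> h\<close> \<open>h < int n\<close> by (simp_all add: j_def)
  moreover have "real n * \<bar>cheb_zero_angle First n j - \<theta>\<bar> < \<epsilon>"
  proof -
    have "real (2 * j - 1) = 2 * of_int h + 1"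
      using \<open>0 \<le> h\<close> by (simp add: j_def of_nat_diff)
    then have "real n * (cheb_zero_angle First n j - \<theta>) = pi * (of_int h + 1/2 - real n * \<alpha>)"
      using \<open>n \<ge> Suc M\<close> by (simp add: \<alpha>_def field_simps)
    then have "real n * \<bar>cheb_zero_angle First n j - \<theta>\<bar> = pi * \<bar>of_int h + 1/2 - real n * \<alpha>\<bar>"
      by (metis abs_mult abs_of_nat abs_of_pos pi_gt_zero)
    also have "\<dots> = pi * \<bar>real n * \<alpha> - of_int h - 1/2\<bar>"
      by (simp add: abs_minus_commute algebra_simps)
    also have "\<dots> < pi * (\<epsilon> / pi)"
      using h by (intro mult_strict_left_mono) auto
    finally show ?thesis by simp
  qed
  ultimately show "\<exists>n\<ge>M. \<exists>j\<ge>1. j \<le> n \<and> real n * \<bar>cheb_zero_angle First n j - \<theta>\<bar> < \<epsilon>"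
    using \<open>n \<ge> Suc M\<close> by (intro exI[of _ n]) auto
qed

lemma zero_angles_approach_Second_irrational:
  assumes "0 < \<theta>" "\<theta> < pi" "\<theta> / pi \<notin> \<rat>"
  shows "zero_angles_approach Second \<theta>"
  unfolding zero_angles_approach_def
proof (intro allI impI)
  fix \<epsilon> :: real and M :: nat
  assume "\<epsilon> > 0"
  define \<alpha> where "\<alpha> = \<theta> / pi"
  have \<alpha>: "0 < \<alpha>" "\<alpha> < 1" using assms by (simp_all add: \<alpha>_def)
  define \<eta> where "\<eta> = min (\<epsilon> / pi) (min \<alpha> (1 - \<alpha>))"
  have "\<eta> > 0" using \<alpha> \<open>\<epsilon> > 0\<close> by (simp add: \<eta>_def)
  then obtain N h where "N \<ge> Suc M" and h: "\<bar>real N * \<alpha> - of_int h\<bar> < \<eta>"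
    using exists_large_multiple_near[of \<alpha> \<eta> "Suc M" 0] assms by (auto simp: \<alpha>_def)
  have "(real N - 1) * (1 - \<alpha>) \<ge> 0" "(real N - 1) * \<alpha> \<ge> 0"
    using \<alpha> \<open>N \<ge> Suc M\<close> by simp_all
  then have "\<alpha> \<le> real N * \<alpha>" "real N * \<alpha> \<le> real N - (1 - \<alpha>)"
    by (simp_all add: algebra_simps)
  then have "0 < h" "h < int N"
    using h by (auto simp: \<eta>_def)
  define n j where "n = N - 1" and "j = nat h"
  have N: "real N = real n + 1" using \<open>N \<ge> Suc M\<close> by (simp add: n_def)
  have "1 \<le> j" "j \<le> n"
    using \<open>0 < h\<close> \<open>h < int N\<close> by (simp_all add: j_def n_def)
  moreover have "real n * \<bar>cheb_zero_angle Second n j - \<theta>\<bar> < \<epsilon>"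
  proof -
    have "real N * (cheb_zero_angle Second n j - \<theta>) = pi * (of_int h - real N * \<alpha>)"
      using \<open>0 < h\<close> N by (simp add: j_def \<alpha>_def field_simps)
    then have "real N * \<bar>cheb_zero_angle Second n j - \<theta>\<bar> = pi * \<bar>real N * \<alpha> - of_int h\<bar>"
      by (metis abs_minus_commute abs_mult abs_of_nat abs_of_pos pi_gt_zero)
    also have "\<dots> < pi * (\<epsilon> / pi)"
      using h by (intro mult_strict_left_mono) (auto simp: \<eta>_def)
    finally show ?thesis
      using N mult_right_mono[of "real n" "real N" "\<bar>cheb_zero_angle Second n j - \<theta>\<bar>"] by simp
  qed
  ultimately show "\<exists>n\<ge>M. \<exists>j\<ge>1. j \<le> n \<and> real n * \<bar>cheb_zero_angle Second n j - \<theta>\<bar> < \<epsilon>"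
    using \<open>N \<ge> Suc M\<close> by (intro exI[of _ n]) (auto simp: n_def)
qed

lemma cheb_zero_angle_Second_eq_rational:
  assumes "0 < s" "s < k"
  shows "\<exists>n\<ge>M. \<exists>j. 1 \<le> j \<and> j \<le> n \<and> cheb_zero_angle Second n j = real s * pi / real k"
proof -
  define n j where "n = k * Suc M - 1" and "j = s * Suc M"
  have n: "real n + 1 = real k * real (Suc M)"
    using assms by (simp add: n_def of_nat_diff algebra_simps)
  have "cheb_zero_angle Second n j = real j * pi / (real n + 1)"
    by simp
  also have "\<dots> = (real s * pi) * real (Suc M) / (real k * real (Suc M))"
    unfolding n j_def of_nat_mult by (simp only: mult_ac)
  also have "\<dots> = real s * pi / real k"
    by (rule mult_divide_mult_cancel_right) simp
  finally have "cheb_zero_angle Second n j = real s * pi / real k" .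
  moreover have "M \<le> n" "1 \<le> j" "j \<le> n"
    using assms mult_le_mono1[of "Suc s" k "Suc M"] by (auto simp: n_def j_def)
  ultimately show ?thesis by blast
qed

lemma cheb_zero_angle_First_eq_rational:
  assumes "s < k" "coprime s k" "even k"
  shows "\<exists>n\<ge>M. \<exists>j. 1 \<le> j \<and> j \<le> n \<and> cheb_zero_angle First n j = real s * pi / real k"
proof -
  \<comment> \<open>\<open>k = 2 k'\<close> forces \<open>s = 2 s' + 1\<close>; take \<open>n = k' (2 M + 1)\<close> and \<open>2 j - 1 = s (2 M + 1)\<close>\<close>
  obtain k' where k': "k = 2 * k'" using assms(3) by auto
  have "odd s"
    using assms(2) k' by auto
  then obtain s' where s': "s = 2 * s' + 1" by (metis oddE)
  define n j where "n = k' * (2 * M + 1)" and "j = s' * (2 * M + 1) + M + 1"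
  have j: "2 * j - 1 = s * (2 * M + 1)"
    by (simp add: j_def s' algebra_simps)
  have "cheb_zero_angle First n j = real (2 * j - 1) * pi / (2 * real n)"
    by simp
  also have "\<dots> = (real s * pi) * real (2 * M + 1) / (real k * real (2 * M + 1))"
    unfolding j n_def k' of_nat_mult by (simp only: mult_ac of_nat_numeral)
  also have "\<dots> = real s * pi / real k"
    by (rule mult_divide_mult_cancel_right) simp
  finally have "cheb_zero_angle First n j = real s * pi / real k" .
  moreover have "M \<le> n" "1 \<le> j" "j \<le> n"
    using assms(1) mult_le_mono1[of "Suc s'" k' "2 * M + 1"] k' s'
    by (auto simp: n_def j_def algebra_simps)
  ultimately show ?thesis by blast
qed

lemma zero_angles_approach_rational:
  assumes "0 < \<theta>" "\<theta> / pi = real s / real k" "s < k" "coprime s k"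
    and "c = Second \<or> even k"
  shows "zero_angles_approach c \<theta>"
proof -
  have "s > 0"
    using assms(1-3) by (auto intro!: Nat.gr0I)
  have "\<theta> = real s * pi / real k"
    using assms(2) by (simp add: field_simps)
  then have "\<exists>n\<ge>M. \<exists>j. 1 \<le> j \<and> j \<le> n \<and> cheb_zero_angle c n j = \<theta>" for M
    using assms(5) cheb_zero_angle_First_eq_rational[OF assms(3,4)]
      cheb_zero_angle_Second_eq_rational[OF \<open>s > 0\<close> assms(3)] by (cases c) auto
  then show ?thesis
    unfolding zero_angles_approach_def by force
qed

section \<open>An integral representation of \<open>xlnx (1 + cos v)\<close>\<close>

text \<open>\<open>cos_kernel y v\<close> is the \<open>y\<close>-derivative of \<open>(1 + cos v) ln (1 + 2 y cos v + y\<^sup>2)\<close>.\<close>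

definition cos_kernel :: "real \<Rightarrow> real \<Rightarrow> real" where
  "cos_kernel y v = (1 + cos v) * (2 * cos v + 2 * y) / (1 + 2 * y * cos v + y\<^sup>2)"

definition cos_kernel_tail :: "real \<Rightarrow> real \<Rightarrow> real" where
  "cos_kernel_tail y v = (cos (2 * v) + y * cos v) / (1 + 2 * y * cos v + y\<^sup>2)"

lemma cos_kernel_denom_pos:
  fixes y v :: real
  assumes "0 \<le> y" "y \<noteq> 1 \<or> cos v \<noteq> -1"
  shows "1 + 2 * y * cos v + y\<^sup>2 > 0"
proof -
  have "1 + 2 * y * cos v + y\<^sup>2 = (1 - y)\<^sup>2 + 2 * y * (1 + cos v)"
    by (simp add: power2_eq_square algebra_simps)
  moreover have "1 + cos v \<ge> 0" "1 + cos v \<noteq> 0 \<or> (1 - y)\<^sup>2 > 0"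
    using cos_ge_minus_one[of v] assms(2) by (auto simp del: cos_ge_minus_one)
  ultimately show ?thesis
    using assms(1) by (smt (verit) zero_le_power2 mult_pos_pos zero_le_mult_iff)
qed

lemma cos_kernel_tail_sums:
  assumes "0 \<le> y" "y < 1"
  shows "(\<lambda>m. (-y) ^ m * cos (real (m + 2) * v)) sums cos_kernel_tail y v"
proof -
  \<comment> \<open>real part of the geometric series \<open>\<Sum>m. e^(2iv) (-y e^(iv))^m = e^(2iv) / (1 + y e^(iv))\<close>\<close>
  define z where "z = cis v"
  have "norm (complex_of_real (-y) * z) < 1"
    using assms by (simp add: z_def norm_mult)
  then have "(\<lambda>m. Re (z\<^sup>2 * (complex_of_real (-y) * z) ^ m))
      sums Re (z\<^sup>2 * (1 / (1 - complex_of_real (-y) * z)))"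
    by (intro sums_Re sums_mult geometric_sums)
  moreover have "Re (z\<^sup>2 * (complex_of_real (-y) * z) ^ m) = (-y) ^ m * cos (real (m + 2) * v)" for m
  proof -
    have "(complex_of_real (-y) * z) ^ m = complex_of_real ((-y) ^ m) * z ^ m"
      by (simp only: power_mult_distrib of_real_power)
    then have "z\<^sup>2 * (complex_of_real (-y) * z) ^ m = complex_of_real ((-y) ^ m) * z ^ (m + 2)"
      by (simp only: power_add mult_ac)
    also have "\<dots> = complex_of_real ((-y) ^ m) * cis (real (m + 2) * v)"
      by (simp only: z_def Complex.DeMoivre)
    finally show ?thesis by simp
  qed
  moreover have "Re (z\<^sup>2 * (1 / (1 - complex_of_real (-y) * z))) = cos_kernel_tail y v"
  proof -
    have "(1 + y * cos v)\<^sup>2 + (y * sin v)\<^sup>2 = 1 + 2 * y * cos v + y\<^sup>2 * ((sin v)\<^sup>2 + (cos v)\<^sup>2)"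
      by algebra
    also have "\<dots> = 1 + 2 * y * cos v + y\<^sup>2"
      by (simp only: sin_cos_squared_add mult_1_right)
    finally have denom: "(1 + y * cos v)\<^sup>2 + (y * sin v)\<^sup>2 = 1 + 2 * y * cos v + y\<^sup>2" .
    have "cos (2 * v) * (1 + y * cos v) + sin (2 * v) * (y * sin v)
        = cos (2 * v) + y * (cos (2 * v) * cos v + sin (2 * v) * sin v)"
      by (simp add: algebra_simps)
    also have "\<dots> = cos (2 * v) + y * cos v"
      using cos_diff[of "2 * v" v] by simp
    finally have num: "cos (2 * v) * (1 + y * cos v) + sin (2 * v) * (y * sin v) = cos (2 * v) + y * cos v" .
    have "z\<^sup>2 * (1 / (1 - complex_of_real (-y) * z)) = cis (2 * v) / (1 + complex_of_real y * cis v)"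
      by (simp add: z_def Complex.DeMoivre)
    then show ?thesis
      using denom num by (simp add: Re_divide cos_kernel_tail_def)
  qed
  ultimately show ?thesis by simp
qed

lemma cos_kernel_eq_tail:
  assumes "0 \<le> y" "y < 1"
  shows "cos_kernel y v = 1 + (2 - y) * cos v + (1 - y)\<^sup>2 * cos_kernel_tail y v"
proof -
  have "1 + 2 * y * cos v + y\<^sup>2 > 0"
    using cos_kernel_denom_pos assms by simp
  moreover have "(1 + cos v) * (2 * cos v + 2 * y) =
      (1 + 2 * y * cos v + y\<^sup>2) * (1 + (2 - y) * cos v) + (1 - y)\<^sup>2 * (cos (2 * v) + y * cos v)"
    unfolding cos_double_cos by (simp add: power2_eq_square algebra_simps)
  ultimately show ?thesis
    by (simp add: cos_kernel_def cos_kernel_tail_def field_simps)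
qed

lemma cos_kernel_at_1: "cos_kernel 1 v = 1 + cos v"
proof (cases "cos v = -1")
  case False
  then have "2 + 2 * cos v \<noteq> 0" by linarith
  then show ?thesis by (simp add: cos_kernel_def field_simps)
qed (simp add: cos_kernel_def)

lemma cos_kernel_has_integral:
  "((\<lambda>y. cos_kernel y v) has_integral (1 + cos v) * ln 2 + xlnx (1 + cos v)) {0..1}"
proof (cases "cos v = -1")
  case True
  then show ?thesis by (simp add: cos_kernel_def xlnx_def)
next
  case False
  then have "1 + cos v > 0"
    using cos_ge_minus_one[of v] by linarith
  define G where "G y = (1 + cos v) * ln (1 + 2 * y * cos v + y\<^sup>2)" for y
  have "((\<lambda>y. cos_kernel y v) has_integral (G 1 - G 0)) {0..1}"
  proof (rule fundamental_theorem_of_calculus)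
    fix y :: real
    assume "y \<in> {0..1}"
    then have "1 + 2 * y * cos v + y\<^sup>2 > 0"
      using cos_kernel_denom_pos False by simp
    then have "(G has_real_derivative (1 + cos v) * ((2 * cos v + 2 * y) / (1 + 2 * y * cos v + y\<^sup>2)))
        (at y within {0..1})"
      unfolding G_def by (auto intro!: derivative_eq_intros simp: power2_eq_square)
    then have "(G has_real_derivative cos_kernel y v) (at y within {0..1})"
      by (simp add: cos_kernel_def)
    then show "(G has_vector_derivative cos_kernel y v) (at y within {0..1})"
      by (simp add: has_real_derivative_iff_has_vector_derivative)
  qed simp
  moreover have "G 1 - G 0 = (1 + cos v) * ln 2 + xlnx (1 + cos v)"
  proof -
    have "1 + 2 * 1 * cos v + 1\<^sup>2 = 2 * (1 + cos v)" by simp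
    then have "G 1 = (1 + cos v) * (ln 2 + ln (1 + cos v))"
      using \<open>1 + cos v > 0\<close> by (simp only: G_def ln_mult) simp
    then show ?thesis
      by (simp add: G_def xlnx_def algebra_simps)
  qed
  ultimately show ?thesis by simp
qed

lemma sum_cos_kernel_tail_sums:
  assumes "0 \<le> y" "y < 1"
  shows "(\<lambda>m. (-y) ^ m * (\<Sum>i\<in>I. cos (real (m + 2) * v i))) sums (\<Sum>i\<in>I. cos_kernel_tail y (v i))"
  using sums_sum[OF cos_kernel_tail_sums[OF assms]] by (simp add: sum_distrib_left)

lemma sum_cos_kernel_eq_tail:
  assumes "0 \<le> y" "y < 1"
  shows "(\<Sum>i\<in>I. cos_kernel y (v i)) =
    real (card I) + (2 - y) * (\<Sum>i\<in>I. cos (v i)) + (1 - y)\<^sup>2 * (\<Sum>i\<in>I. cos_kernel_tail y (v i))"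
  using cos_kernel_eq_tail[OF assms] by (simp add: sum.distrib sum_distrib_left)

lemma has_integral_sum_cos_kernel:
  "((\<lambda>y. \<Sum>i<n. cos_kernel y (v i)) has_integral
      (real n + (\<Sum>i<n. cos (v i))) * ln 2 + (\<Sum>i<n. xlnx (1 + cos (v i)))) {0..1}"
  using has_integral_sum[OF _ cos_kernel_has_integral, of "{..<n}" v]
  by (simp add: sum.distrib algebra_simps flip: sum_distrib_right)

lemma sum_cos_kernel_odd_multiples_ge:
  assumes "n > 0" "odd c" "y \<in> {0..1}"
  defines "v i \<equiv> real i * (real c * pi / real n)"
  shows "(\<Sum>i<n. cos_kernel y (v i)) \<ge> real n + 1"
proof -
  have C: "(\<Sum>i<n. cos (real l * v i)) = (if 2 * n dvd c * l then real n else if odd (c * l) then 1 else 0)"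
    for l
    using sum_cos_mult_pi_div[OF assms(1), of "c * l"] by (simp add: v_def mult_ac)
  have C_odd: "(\<Sum>i<n. cos (real l * v i)) = 1" if "odd l" for l
    using C[of l] that assms(2) by (auto dest: dvd_mult_left)
  have C_nonneg: "(\<Sum>i<n. cos (real l * v i)) \<ge> 0" for l
    using C[of l] by simp
  show ?thesis
  proof (cases "y = 1")
    case True
    then show ?thesis using C_odd[of 1] by (simp add: cos_kernel_at_1 sum.distrib)
  next
    case False
    with assms(3) have y: "0 \<le> y" "y < 1" by auto
    have geom: "(\<lambda>m. - (y ^ m)) sums (- (1 / (1 - y)))"
      using geometric_sums[of y] y by (intro sums_minus) simp
    have "- (y ^ m) \<le> (-y) ^ m * (\<Sum>i<n. cos (real (m + 2) * v i))" for m
    proof (cases "even m")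
      case True
      then have "0 \<le> (-y) ^ m * (\<Sum>i<n. cos (real (m + 2) * v i))"
        using C_nonneg[of "m + 2"] y by simp
      then show ?thesis using y by (smt (verit) zero_le_power)
    next
      case False
      then show ?thesis using C_odd[of "m + 2"] by simp
    qed
    then have "- (1 / (1 - y)) \<le> (\<Sum>i<n. cos_kernel_tail y (v i))"
      using sums_le[OF _ geom sum_cos_kernel_tail_sums[OF y, of v "{..<n}"]] by simp
    then have "(1 - y)\<^sup>2 * (\<Sum>i<n. cos_kernel_tail y (v i)) \<ge> - (1 - y)"
      using mult_left_mono[of "- (1 / (1 - y))" _ "(1 - y)\<^sup>2"] y by (simp add: power2_eq_square)
    then show ?thesis
      using sum_cos_kernel_eq_tail[OF y, of v "{..<n}"] C_odd[of 1] by simp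
  qed
qed

lemma sum_xlnx_one_plus_cos_odd_multiples_ge:
  assumes "n > 0" "odd c"
  shows "(\<Sum>i<n. xlnx (1 + cos (real i * (real c * pi / real n)))) \<ge> (real n + 1) * (1 - ln 2)"
proof -
  define v where "v i = real i * (real c * pi / real n)" for i
  have "real n + 1 \<le> (real n + (\<Sum>i<n. cos (v i))) * ln 2 + (\<Sum>i<n. xlnx (1 + cos (v i)))"
    using sum_cos_kernel_odd_multiples_ge[OF assms] unfolding v_def
    by (intro has_integral_le[OF _ has_integral_sum_cos_kernel, of "\<lambda>_. real n + 1"])
      (auto simp: has_integral_const_real[of "real n + 1" 0 "1::real", simplified])
  moreover have "(\<Sum>i<n. cos (v i)) = 1"
    using sum_cos_mult_pi_div[OF assms(1), of c] assms(2) by (auto simp: v_def dest: dvd_mult_left)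
  ultimately show ?thesis
    by (simp add: v_def algebra_simps)
qed

lemma geometric_sums_dvd_add_2:
  fixes x :: real
  assumes "k \<ge> 2" "\<bar>x\<bar> < 1"
  shows "(\<lambda>m. if k dvd m + 2 then x ^ m else 0) sums (x ^ (k - 2) / (1 - x ^ k))"
proof -
  define f where "f m = (if k dvd m + 2 then x ^ m else 0)" for m
  define g where "g t = t * k + (k - 2)" for t
  have "strict_mono g"
  proof (rule strict_monoI)
    fix a b :: nat
    assume "a < b"
    then have "a * k < b * k" using assms(1) by simp
    then show "g a < g b" unfolding g_def by linarith
  qed
  moreover have "f m = 0" if "m \<notin> range g" for m
  proof (rule ccontr)
    assume "f m \<noteq> 0"
    then obtain u where u: "m + 2 = k * u" by (auto simp: f_def split: if_splits)
    with assms(1) have "u \<ge> 1" by (cases u) auto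
    with u assms(1) have "m = g (u - 1)" by (cases u) (auto simp: g_def algebra_simps)
    with that show False by auto
  qed
  moreover have "(\<lambda>t. f (g t)) sums (x ^ (k - 2) / (1 - x ^ k))"
  proof -
    have "\<bar>x ^ k\<bar> < 1"
      using assms by (simp add: power_abs power_less_one_iff)
    then have "(\<lambda>t. x ^ (k - 2) * (x ^ k) ^ t) sums (x ^ (k - 2) * (1 / (1 - x ^ k)))"
      by (intro sums_mult geometric_sums) simp
    moreover have "f (g t) = x ^ (k - 2) * (x ^ k) ^ t" for t
    proof -
      have "g t + 2 = (t + 1) * k" using assms(1) by (simp add: g_def algebra_simps)
      then have "f (g t) = x ^ g t" by (simp add: f_def)
      also have "\<dots> = x ^ (k - 2) * (x ^ k) ^ t"
        by (simp add: g_def power_add power_mult mult.commute)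
      finally show ?thesis .
    qed
    ultimately show ?thesis by simp
  qed
  ultimately show ?thesis
    unfolding f_def[symmetric] by (simp add: sums_mono_reindex)
qed

lemma has_integral_one_minus_sq_mult_power:
  "((\<lambda>y::real. (1 - y)\<^sup>2 * y ^ j) has_integral 2 / ((real j + 1) * (real j + 2) * (real j + 3))) {0..1}"
proof -
  define F where "F y = y ^ (j + 1) / (real j + 1) - 2 * y ^ (j + 2) / (real j + 2) + y ^ (j + 3) / (real j + 3)"
    for y :: real
  have "((\<lambda>y::real. (1 - y)\<^sup>2 * y ^ j) has_integral (F 1 - F 0)) {0..1}"
  proof (rule fundamental_theorem_of_calculus)
    fix y :: real
    assume "y \<in> {0..1}"
    have power: "((\<lambda>y. y ^ (j + a) / (real j + a)) has_real_derivative y ^ (j + a - 1))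
        (at y within {0..1})" if "a \<ge> 1" for a :: nat
    proof -
      have "((\<lambda>y. y ^ (j + a) / (real j + a)) has_real_derivative
          real (j + a) * y ^ (j + a - Suc 0) / (real j + a)) (at y within {0..1})"
        by (rule DERIV_cdivide[OF DERIV_pow])
      then show ?thesis using that by simp
    qed
    have "(F has_real_derivative y ^ j - 2 * y ^ (j + 1) + y ^ (j + 2)) (at y within {0..1})"
      unfolding F_def times_divide_eq_right[symmetric]
      using power[of 1] power[of 2] power[of 3] by (intro DERIV_add DERIV_diff DERIV_cmult) simp_all
    then show "(F has_vector_derivative (1 - y)\<^sup>2 * y ^ j) (at y within {0..1})"
      by (simp add: has_real_derivative_iff_has_vector_derivative power2_eq_square algebra_simps)
  qed simp
  moreover have "F 1 - F 0 = 2 / ((real j + 1) * (real j + 2) * (real j + 3))"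
  proof -
    have "F 0 = 0" by (simp add: F_def)
    moreover have "F 1 = 1 / (real j + 1) - 2 / (real j + 2) + 1 / (real j + 3)"
      by (simp add: F_def)
    moreover have "1 / (J + 1) - 2 / (J + 2) + 1 / (J + 3) = 2 / ((J + 1) * (J + 2) * (J + 3))"
      if "J \<ge> 0" for J :: real
    proof -
      have "J + 1 \<noteq> 0" "J + 2 \<noteq> 0" "J + 3 \<noteq> 0" using that by linarith+
      then show ?thesis by (simp add: divide_simps) (simp add: algebra_simps)
    qed
    ultimately show ?thesis by simp
  qed
  ultimately show ?thesis by simp
qed

lemma sum_cos_roots:
  assumes "k > 0" "coprime s k"
  shows "(\<Sum>r<k. cos (real l * (real r * (2 * pi * real s / real k)))) = (if k dvd l then real k else 0)"
proof -
  have "(\<Sum>r<k. cos (real l * (real r * (2 * pi * real s / real k))))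
      = (\<Sum>r<k. cos (real r * (real (2 * s * l) * pi / real k)))"
    by (simp add: mult_ac)
  moreover have "2 * k dvd 2 * s * l \<longleftrightarrow> k dvd l"
    using assms(2) by (simp add: coprime_commute coprime_dvd_mult_right_iff flip: mult.assoc)
  ultimately show ?thesis
    using sum_cos_mult_pi_div[of k "2 * s * l"] assms(1) by simp
qed

lemma sum_cos_kernel_roots_le:
  assumes "odd k" "k \<ge> 3" "coprime s k" "y \<in> {0..1}"
  defines "v r \<equiv> real r * (2 * pi * real s / real k)"
  shows "(\<Sum>r<k. cos_kernel y (v r)) \<le> real k - real k / 2 * ((1 - y)\<^sup>2 * y ^ (k - 2))"
proof -
  have C: "(\<Sum>r<k. cos (real l * v r)) = (if k dvd l then real k else 0)" for l
    using sum_cos_roots[OF _ assms(3), of l] assms(2) by (simp add: v_def)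
  have C1: "(\<Sum>r<k. cos (v r)) = 0"
    using C[of 1] assms(2) by simp
  show ?thesis
  proof (cases "y = 1")
    case True
    then show ?thesis using C1 by (simp add: cos_kernel_at_1 sum.distrib)
  next
    case False
    with assms(4) have y: "0 \<le> y" "y < 1" by auto
    have "(\<lambda>m. (-y) ^ m * (if k dvd m + 2 then real k else 0)) sums (\<Sum>r<k. cos_kernel_tail y (v r))"
      using sum_cos_kernel_tail_sums[OF y, of v "{..<k}"] unfolding C .
    moreover have "(\<lambda>m. (-y) ^ m * (if k dvd m + 2 then real k else 0))
        sums (- (real k * y ^ (k - 2) / (1 + y ^ k)))"
    proof -
      have "(\<lambda>m. real k * (if k dvd m + 2 then (-y) ^ m else 0))
          sums (real k * ((-y) ^ (k - 2) / (1 - (-y) ^ k)))"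
        using assms(2) y by (intro sums_mult geometric_sums_dvd_add_2) auto
      moreover have "odd (k - 2)" using assms(1,2) by simp
      ultimately show ?thesis
        using assms(1) by (simp add: if_distrib mult.commute cong: if_cong)
    qed
    ultimately have tail: "(\<Sum>r<k. cos_kernel_tail y (v r)) = - (real k * y ^ (k - 2) / (1 + y ^ k))"
      by (rule sums_unique2)
    have "real k * y ^ (k - 2) / 2 \<le> real k * y ^ (k - 2) / (1 + y ^ k)"
      using y by (intro divide_left_mono) (auto simp: power_le_one add_pos_nonneg)
    then have "(1 - y)\<^sup>2 * (\<Sum>r<k. cos_kernel_tail y (v r)) \<le> (1 - y)\<^sup>2 * (- (real k * y ^ (k - 2) / 2))"
      unfolding tail by (intro mult_left_mono) auto
    then show ?thesis
      using sum_cos_kernel_eq_tail[OF y, of v "{..<k}"] C1 by (simp add: algebra_simps)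
  qed
qed

lemma sum_xlnx_one_plus_cos_roots_le:
  assumes "odd k" "k \<ge> 3" "coprime s k"
  shows "(\<Sum>r<k. xlnx (1 + cos (real r * (2 * pi * real s / real k))))
           \<le> real k * (1 - ln 2) - 1 / ((real k - 1) * (real k + 1))"
proof -
  define v where "v r = real r * (2 * pi * real s / real k)" for r
  define U where "U y = real k - real k / 2 * ((1 - y)\<^sup>2 * y ^ (k - 2))" for y :: real
  have "(U has_integral (real k - 1 / ((real k - 1) * (real k + 1)))) {0..1}"
  proof -
    have "((\<lambda>y. (1 - y)\<^sup>2 * y ^ (k - 2)) has_integral 2 / ((real k - 1) * real k * (real k + 1))) {0..1}"
      using has_integral_one_minus_sq_mult_power[of "k - 2"] assms(2) by (simp add: of_nat_diff add.commute)
    from has_integral_diff[OF has_integral_const_real[of "real k" 0 1]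
        has_integral_mult_right[OF this, of "real k / 2"]]
    have "(U has_integral (real k - real k / 2 * (2 / ((real k - 1) * real k * (real k + 1))))) {0..1}"
      unfolding U_def[abs_def] by simp
    moreover have "real k - 1 \<noteq> 0" "real k \<noteq> 0" "real k + 1 \<noteq> 0"
      using assms(2) by auto
    then have "real k / 2 * (2 / ((real k - 1) * real k * (real k + 1))) = 1 / ((real k - 1) * (real k + 1))"
      by (simp add: divide_simps)
    ultimately show ?thesis
      by simp
  qed
  then have "(real k + (\<Sum>r<k. cos (v r))) * ln 2 + (\<Sum>r<k. xlnx (1 + cos (v r)))
      \<le> real k - 1 / ((real k - 1) * (real k + 1))"
    using sum_cos_kernel_roots_le[OF assms] unfolding U_def v_def
    by (intro has_integral_le[OF has_integral_sum_cos_kernel]) auto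
  moreover have "(\<Sum>r<k. cos (v r)) = 0"
    using sum_cos_roots[of k s 1] assms by (simp add: v_def)
  ultimately show ?thesis
    by (simp add: v_def algebra_simps)
qed

section \<open>First kind, odd denominator\<close>

lemma entropy_at_zero_First_le:
  assumes "1 \<le> j" "j \<le> n"
  shows "entropy_at_zero First n j \<le> ln (real n) - (1 - ln 2) + 2 / real n"
proof -
  define \<phi> where "\<phi> = cheb_zero_angle First n j"
  have "n > 0" using assms by simp
  have angle: "real i * (2 * \<phi>) = real i * (real (2 * j - 1) * pi / real n)" for i
    using \<open>n > 0\<close> by (simp add: \<phi>_def)
  have "odd (2 * j - 1)" "\<not> 2 * n dvd 2 * j - 1"
    using assms by (auto dest: dvd_mult_left)
  then have W: "(\<Sum>i<n. cheb_weight First \<phi> i) = real n"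
    using sum_cheb_weight_First[OF \<open>n > 0\<close>, of "\<lambda>x. x" \<phi>] sum_cos_mult_pi_div[OF \<open>n > 0\<close>, of "2 * j - 1"]
    unfolding angle by (simp add: sum.distrib)
  have "(\<Sum>i<n. xlnx (cheb_weight First \<phi> i)) \<ge> (real n + 1) * (1 - ln 2) - 2 * ln 2"
    using sum_cheb_weight_First[OF \<open>n > 0\<close>, of xlnx \<phi>] \<open>odd (2 * j - 1)\<close>
      sum_xlnx_one_plus_cos_odd_multiples_ge[OF \<open>n > 0\<close>, of "2 * j - 1"]
    unfolding angle by (simp add: xlnx_def)
  then have "(\<Sum>i<n. xlnx (cheb_weight First \<phi> i)) \<ge> real n * (1 - ln 2) - 2"
    using ln_2_less_1 by (simp add: algebra_simps)
  then have "(\<Sum>i<n. xlnx (cheb_weight First \<phi> i)) / real n \<ge> (real n * (1 - ln 2) - 2) / real n"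
    using \<open>n > 0\<close> by (intro divide_right_mono) auto
  then have "(\<Sum>i<n. xlnx (cheb_weight First \<phi> i)) / real n \<ge> (1 - ln 2) - 2 / real n"
    using \<open>n > 0\<close> by (simp add: diff_divide_distrib)
  moreover have "entropy_at_zero First n j = entropy First n (cos \<phi>)"
    by (simp add: entropy_at_zero_def cheb_zero_eq_cos_angle \<phi>_def)
  moreover have "0 < \<phi>" "\<phi> < pi"
    using cheb_zero_angle_bounds[OF assms, of First] by (simp_all only: \<phi>_def)
  ultimately show ?thesis
    using entropy_cos_eq_weight_entropy[of \<phi> n First] \<open>n > 0\<close> W by (simp add: weight_entropy_def)
qed

lemma sum_lessThan_periodic:
  fixes h :: "nat \<Rightarrow> 'a::comm_semiring_1"
  assumes "\<And>i. h (i + k) = h i"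
  shows "(\<Sum>i<q * k + r. h i) = of_nat q * (\<Sum>i<k. h i) + (\<Sum>i<r. h i)"
proof (induction q)
  case (Suc q)
  have split: "(\<Sum>i<k + m. h i) = (\<Sum>i<k. h i) + (\<Sum>i<m. h (k + i))" for m
    by (induction m) (simp_all add: add_ac)
  have "(\<Sum>i<Suc q * k + r. h i) = (\<Sum>i<k. h i) + (\<Sum>i<q * k + r. h (k + i))"
    using split[of "q * k + r"] by (simp add: add_ac)
  also have "(\<Sum>i<q * k + r. h (k + i)) = (\<Sum>i<q * k + r. h i)"
    using assms by (simp add: add.commute)
  finally show ?case
    using Suc by (simp add: algebra_simps)
qed simp

lemma sum_lessThan_periodic_le:
  fixes h :: "nat \<Rightarrow> real"
  assumes "k > 0" "\<And>i. h (i + k) = h i" "\<And>i. \<bar>h i\<bar> \<le> B"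
  shows "(\<Sum>i<n. h i) \<le> real n / real k * (\<Sum>i<k. h i) + 2 * real k * B"
proof -
  define T where "T = (\<Sum>i<k. h i)"
  define q r where "q = n div k" and "r = n mod k"
  have "r < k" "n = q * k + r"
    using assms(1) by (simp_all add: q_def r_def)
  have "B \<ge> 0" using assms(3)[of 0] by linarith
  have bounded: "\<bar>\<Sum>i<m. h i\<bar> \<le> real m * B" for m
    using abs_sum_lessThan_diff_le[of m h "\<lambda>_. 0" B] assms(3) by simp
  have "real r * B \<le> real k * B"
    using \<open>r < k\<close> \<open>B \<ge> 0\<close> by (intro mult_right_mono) auto
  then have R: "\<bar>\<Sum>i<r. h i\<bar> \<le> real k * B"
    using bounded[of r] by linarith
  have "real r / real k \<le> 1" using \<open>r < k\<close> by simp
  then have "\<bar>real r / real k * T\<bar> \<le> \<bar>T\<bar>"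
    using mult_right_mono[of "real r / real k" 1 "\<bar>T\<bar>"] by (simp add: abs_mult)
  moreover have "\<bar>T\<bar> \<le> real k * B"
    using bounded[of k] by (simp add: T_def)
  moreover have "real n / real k * T - real r / real k * T = real q * T"
    using assms(1) by (simp add: \<open>n = q * k + r\<close> field_simps)
  then have "(\<Sum>i<n. h i) = real n / real k * T - real r / real k * T + (\<Sum>i<r. h i)"
    using sum_lessThan_periodic[of h k q r, OF assms(2)] \<open>n = q * k + r\<close> by (simp add: T_def)
  ultimately show ?thesis
    using R unfolding T_def by linarith
qed

lemma sum_xlnx_cheb_weight_First_odd_rational_le:
  assumes "odd k" "k \<ge> 3" "coprime s k" "n > 0"
  shows "(\<Sum>i<n. xlnx (cheb_weight First (pi * real s / real k) i))
           \<le> real n * (1 - ln 2 - 1 / (real k * (real k - 1) * (real k + 1))) + 4 * real k"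
proof -
  define h where "h i = xlnx (1 + cos (real i * (2 * pi * real s / real k)))" for i
  have "k > 0" using assms(2) by simp
  have "h (i + k) = h i" for i
  proof -
    have "real (i + k) * (2 * pi * real s / real k) = real i * (2 * pi * real s / real k) + 2 * real s * pi"
      using \<open>k > 0\<close> by (simp add: field_simps)
    then show ?thesis
      by (simp add: h_def cos_add)
  qed
  moreover have "\<bar>h i\<bar> \<le> 2" for i
  proof -
    have "0 \<le> 1 + cos t" "1 + cos t \<le> 2" for t :: real
      using cos_ge_minus_one[of t] cos_le_one[of t] by linarith+
    then show ?thesis
      unfolding h_def using abs_xlnx_le by simp
  qed
  ultimately have "(\<Sum>i<n. h i) \<le> real n / real k * (\<Sum>i<k. h i) + 4 * real k"
    using sum_lessThan_periodic_le[OF \<open>k > 0\<close>, of h 2] by simp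
  also have "real n / real k * (\<Sum>i<k. h i)
      \<le> real n / real k * (real k * (1 - ln 2) - 1 / ((real k - 1) * (real k + 1)))"
    using sum_xlnx_one_plus_cos_roots_le[OF assms(1-3)] by (intro mult_left_mono) (simp_all add: h_def)
  also have "\<dots> = real n * (1 - ln 2 - 1 / (real k * (real k - 1) * (real k + 1)))"
  proof -
    have "real k \<noteq> 0" "real k - 1 \<noteq> 0" "real k + 1 \<noteq> 0" using assms(2) by auto
    then show ?thesis by (simp add: divide_simps)
  qed
  finally have "(\<Sum>i<n. h i) \<le> real n * (1 - ln 2 - 1 / (real k * (real k - 1) * (real k + 1))) + 4 * real k"
    by simp
  moreover have "(\<Sum>i<n. xlnx (cheb_weight First (pi * real s / real k) i)) \<le> (\<Sum>i<n. h i)"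
    using sum_cheb_weight_First[OF assms(4), of xlnx "pi * real s / real k"]
    by (simp add: h_def xlnx_def mult_ac)
  ultimately show ?thesis by linarith
qed

lemma entropy_gap_First_odd_rational_le:
  assumes "\<theta> = pi * real s / real k" "0 < \<theta>" "\<theta> < pi" "odd k" "k \<ge> 3" "coprime s k"
    and "1 \<le> j" "j \<le> n" and W: "W = (\<Sum>i<n. cheb_weight First \<theta> i)" "W > 0"
  shows "entropy_at_zero First n j - entropy First n (cos \<theta>) \<le>
    ln (real n / W) - (1 - ln 2) + 2 / real n
      + (1 - ln 2 - 1 / (real k * (real k - 1) * (real k + 1)) + 4 * real k / real n) * (real n / W)"
proof -
  define a where "a = 1 - ln 2 - 1 / (real k * (real k - 1) * (real k + 1))"
  define T where "T = (\<Sum>i<n. xlnx (cheb_weight First \<theta> i))"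
  have "n > 0" using assms(7,8) by simp
  have "T \<le> real n * a + 4 * real k"
    using sum_xlnx_cheb_weight_First_odd_rational_le[OF assms(4-6) \<open>n > 0\<close>]
    by (simp add: T_def a_def assms(1))
  then have "T / W \<le> (real n * a + 4 * real k) / W"
    using \<open>W > 0\<close> by (simp add: divide_right_mono)
  also have "\<dots> = (a + 4 * real k / real n) * (real n / W)"
    using \<open>n > 0\<close> \<open>W > 0\<close> by (simp add: field_simps)
  finally have "T / W \<le> (a + 4 * real k / real n) * (real n / W)" .
  moreover have "entropy First n (cos \<theta>) = ln W - T / W"
    using entropy_cos_eq_weight_entropy[OF assms(2,3) \<open>n > 0\<close>]
    by (simp add: weight_entropy_def W T_def)
  moreover have "ln (real n / W) = ln (real n) - ln W"
    using \<open>n > 0\<close> \<open>W > 0\<close> by (simp add: ln_div)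
  ultimately show ?thesis
    using entropy_at_zero_First_le[OF assms(7,8)] unfolding a_def by linarith
qed

lemma tendsto_real_divide_of_bounded_diff:
  fixes W :: "nat \<Rightarrow> real"
  assumes "\<And>n. n > 0 \<Longrightarrow> \<bar>W n - real n\<bar> \<le> D"
  shows "(\<lambda>n. real n / W n) \<longlonglongrightarrow> 1"
proof -
  have "(\<lambda>n. W n / real n) \<longlonglongrightarrow> 1"
  proof (rule tendsto_sandwich)
    have bounds: "1 - D / real n \<le> W n / real n \<and> W n / real n \<le> 1 + D / real n" if "n > 0" for n
    proof -
      have "real n - D \<le> W n" "W n \<le> real n + D"
        using assms[OF that] by linarith+
      then have "(real n - D) / real n \<le> W n / real n" "W n / real n \<le> (real n + D) / real n"
        by (intro divide_right_mono; simp)+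
      then show ?thesis
        using that by (simp add: diff_divide_distrib add_divide_distrib)
    qed
    show "eventually (\<lambda>n. 1 - D / real n \<le> W n / real n) sequentially"
      and "eventually (\<lambda>n. W n / real n \<le> 1 + D / real n) sequentially"
      by (rule eventually_mono[OF eventually_gt_at_top[of "0::nat"]], use bounds in blast)+
  qed real_asymp+
  then show ?thesis
    using tendsto_inverse[of "\<lambda>n. W n / real n" 1] by simp
qed

lemma limsup_entropy_gap_First_odd_neg:
  assumes "0 < \<theta>" "\<theta> / pi = real s / real k" "s < k" "coprime s k" "odd k"
    and "strict_mono r" and j: "\<And>m. 1 \<le> j m \<and> j m \<le> r m"
  shows "Limsup sequentially
           (\<lambda>m. ereal (entropy_at_zero First (r m) (j m) - entropy First (r m) (cos \<theta>))) < 0"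
proof -
  have "s > 0" using assms(1,2) by (auto intro!: Nat.gr0I)
  then have "k \<ge> 3" using assms(3,5) by presburger
  have \<theta>: "\<theta> = pi * real s / real k"
    using assms(2) by (simp add: field_simps)
  have "real s / real k < 1" using assms(3) by simp
  then have "\<theta> < pi"
    using mult_strict_left_mono[of "real s / real k" 1 pi] by (simp add: \<theta>)
  define \<gamma> where "\<gamma> = 1 / (real k * (real k - 1) * (real k + 1))"
  define D where "D = 1 + 1 / sin \<theta>"
  define W where "W n = (\<Sum>i<n. cheb_weight First \<theta> i)" for n
  define G where "G n = ln (real n / W n) - (1 - ln 2) + 2 / real n
      + (1 - ln 2 - \<gamma> + 4 * real k / real n) * (real n / W n)" for n
  have "\<gamma> > 0" using \<open>k \<ge> 3\<close> by (simp add: \<gamma>_def)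
  have W: "\<bar>W n - real n\<bar> \<le> D" if "n > 0" for n
    using abs_sum_cheb_weight_diff_le[OF assms(1) \<open>\<theta> < pi\<close> that, of First] by (simp only: W_def D_def)
  have gap: "entropy_at_zero First n jj - entropy First n (cos \<theta>) \<le> G n"
    if "real n > D" "1 \<le> jj" "jj \<le> n" for n jj
    using entropy_gap_First_odd_rational_le[OF \<theta> assms(1) \<open>\<theta> < pi\<close> assms(5) \<open>k \<ge> 3\<close> assms(4) that(2,3)]
      W[of n] that by (simp add: G_def \<gamma>_def W_def)
  have "G \<longlonglongrightarrow> ln 1 - (1 - ln 2) + 0 + (1 - ln 2 - \<gamma> + 0) * 1"
    unfolding G_def using tendsto_real_divide_of_bounded_diff[OF W]
    by (intro tendsto_intros) (simp | real_asymp)+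
  then have "eventually (\<lambda>n. G n < - \<gamma> / 2 \<and> real n > D) sequentially"
    using \<open>\<gamma> > 0\<close> by (intro eventually_conj order_tendstoD(2) filterlim_real_sequentially
        [THEN filterlim_at_top_dense[THEN iffD1], rule_format]) auto
  then have "eventually (\<lambda>m. G (r m) < - \<gamma> / 2 \<and> real (r m) > D) sequentially"
    using filterlim_subseq[OF \<open>strict_mono r\<close>] unfolding filterlim_iff by blast
  then have "eventually (\<lambda>m. ereal (entropy_at_zero First (r m) (j m) - entropy First (r m) (cos \<theta>))
      \<le> ereal (- \<gamma> / 2)) sequentially"
    by eventually_elim (use gap j in fastforce)
  then have "Limsup sequentially (\<lambda>m. ereal (entropy_at_zero First (r m) (j m) - entropy First (r m) (cos \<theta>)))
      \<le> ereal (- \<gamma> / 2)"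
    by (rule Limsup_bounded)
  also have "\<dots> < 0" using \<open>\<gamma> > 0\<close> by simp
  finally show ?thesis .
qed

theorem theorem2:
  fixes \<theta> :: real
  assumes "0 < \<theta>" and "\<theta> < pi"
  shows
   "(\<theta> / pi \<notin> \<rat> \<longrightarrow>
      (\<forall>c. \<exists>nm jm :: nat \<Rightarrow> nat.
          filterlim nm at_top sequentially \<and>
          (\<forall>m. 1 \<le> jm m \<and> jm m \<le> nm m) \<and>
          ((\<lambda>m. cheb_zero c (nm m) (jm m)) \<longlonglongrightarrow> cos \<theta>) \<and>
          ((\<lambda>m. entropy_at_zero c (nm m) (jm m) - entropy c (nm m) (cos \<theta>)) \<longlonglongrightarrow> 0)))
    \<and>
    (\<forall>s k :: nat. \<theta> / pi = real s / real k \<and> s < k \<and> gcd s k = 1 \<longrightarrow>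
      (\<forall>c. (c = Second \<or> even k) \<longrightarrow>
         (\<exists>nm jm :: nat \<Rightarrow> nat.
          filterlim nm at_top sequentially \<and>
          (\<forall>m. 1 \<le> jm m \<and> jm m \<le> nm m) \<and>
          ((\<lambda>m. cheb_zero c (nm m) (jm m)) \<longlonglongrightarrow> cos \<theta>) \<and>
          ((\<lambda>m. entropy_at_zero c (nm m) (jm m) - entropy c (nm m) (cos \<theta>)) \<longlonglongrightarrow> 0)))
      \<and>
      (odd k \<longrightarrow>
         (\<forall>r j :: nat \<Rightarrow> nat. strict_mono r \<and> (\<forall>m. 1 \<le> j m \<and> j m \<le> r m) \<longrightarrow>
            Limsup sequentially
              (\<lambda>m. ereal (entropy_at_zero First (r m) (j m) - entropy First (r m) (cos \<theta>))) < 0)))"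
  unfolding entropy_gap_vanishes_def[symmetric]
proof (intro conjI allI impI)
  fix c
  assume "\<theta> / pi \<notin> \<rat>"
  then show "entropy_gap_vanishes c \<theta>"
    using assms by (cases c) (auto intro: entropy_gap_vanishes_if_zero_angles_approach
        zero_angles_approach_First_irrational zero_angles_approach_Second_irrational)
next
  fix s k c
  assume "\<theta> / pi = real s / real k \<and> s < k \<and> gcd s k = 1" "c = Second \<or> even k"
  then show "entropy_gap_vanishes c \<theta>"
    using assms by (auto intro!: entropy_gap_vanishes_if_zero_angles_approach zero_angles_approach_rational
        simp: coprime_iff_gcd_eq_1)
next
  fix s k and r j :: "nat \<Rightarrow> nat"
  assume "\<theta> / pi = real s / real k \<and> s < k \<and> gcd s k = 1" "odd k"
    and "strict_mono r \<and> (\<forall>m. 1 \<le> j m \<and> j m \<le> r m)"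
  then show "Limsup sequentially
      (\<lambda>m. ereal (entropy_at_zero First (r m) (j m) - entropy First (r m) (cos \<theta>))) < 0"
    using limsup_entropy_gap_First_odd_neg[OF assms(1)] by (auto simp: coprime_iff_gcd_eq_1)
qed

end
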